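(* Let $n$ be a positive integer, $Q \in \{L,R\}$ and $X \in \mathcal{RB}_n$. Suppose there is a positive integer $i$ with $XQ^i \notin \mathcal{RB}_n$, and let $i$ be the least such positive integer. Then $i \leq n$.
   Context: $L = \begin{pmatrix} 1 & 0 \\ 1 & 1\end{pmatrix}$, $R = \begin{pmatrix} 1 & 1 \\ 0 & 1\end{pmatrix}$. For a positive integer $n$, $\mathcal{D}_n$ is the set of $2\times 2$ matrices $A$ with nonnegative integer entries, $\det A = n$, and the greatest common divisor of all entries of $A$ equal to $1$. $\mathcal{RB}_n = \left\{ \begin{pmatrix} a & b \\ c & d\end{pmatrix} \in \mathcal{D}_n : a > c \text{ and } d > b\right\}$. *)

theory Defs
  imports Main
begin

text \<open>2x2 matrices with nonnegative integer entries, (a,b,c,d) stands for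
  the matrix with rows (a b) and (c d).\<close>
type_synonym mat2 = "nat \<times> nat \<times> nat \<times> nat"

fun mmul :: "mat2 \<Rightarrow> mat2 \<Rightarrow> mat2" where
  "mmul (a,b,c,d) (e,f,g,h) = (a*e + b*g, a*f + b*h, c*e + d*g, c*f + d*h)"

definition mid :: mat2 where "mid = (1,0,0,1)"

fun mpow :: "mat2 \<Rightarrow> nat \<Rightarrow> mat2" where
  "mpow M 0 = mid"
| "mpow M (Suc k) = mmul (mpow M k) M"

definition Lmat :: mat2 where "Lmat = (1,0,1,1)"
definition Rmat :: mat2 where "Rmat = (1,1,0,1)"

fun mdet :: "mat2 \<Rightarrow> int" where
  "mdet (a,b,c,d) = int a * int d - int b * int c"

fun mgcd :: "mat2 \<Rightarrow> nat" where
  "mgcd (a,b,c,d) = gcd (gcd a b) (gcd c d)"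

definition Dset :: "nat \<Rightarrow> mat2 set" where
  "Dset n = {M. mdet M = int n \<and> mgcd M = 1}"

definition RBset :: "nat \<Rightarrow> mat2 set" where
  "RBset n = {(a,b,c,d) | a b c d. (a,b,c,d) \<in> Dset n \<and> a > c \<and> d > b}"

end

theory Submission
  imports Defs
begin

text \<open>If \<open>X = (a,b,c,d) \<in> RB\<^sub>n\<close> then \<open>a \<le> n\<close> and \<open>d \<le> n\<close>, because
  \<open>n = ad - bc \<ge> a(d - b) + b\<close> and \<open>n \<ge> d(a - c) + c\<close>. Since \<open>XR\<^sup>n = (a, b + na, c, d + nc)\<close>
  and \<open>d + nc \<le> (c + 1)n \<le> an\<close>, the matrix \<open>XR\<^sup>n\<close> violates the condition on the
  second column; symmetrically \<open>XL\<^sup>n = (a + nb, b, c + nd, d)\<close> violates the one on the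
  first column.\<close>

lemma mpow_Rmat: "mpow Rmat k = (1, k, 0, 1)"
  by (induction k) (auto simp: mid_def Rmat_def)

lemma mpow_Lmat: "mpow Lmat k = (1, 0, k, 1)"
  by (induction k) (auto simp: mid_def Lmat_def)

lemma RBset_iff:
  "(a, b, c, d) \<in> RBset n \<longleftrightarrow>
     int a * int d - int b * int c = int n \<and> gcd (gcd a b) (gcd c d) = 1 \<and> c < a \<and> b < d"
  by (auto simp: RBset_def Dset_def)

lemma RBset_diagonal_le:
  assumes "(a, b, c, d) \<in> RBset n"
  shows "a \<le> n" and "d \<le> n"
proof -
  have det: "int a * int d - int b * int c = int n" and "c < a" "b < d"
    using assms by (auto simp: RBset_iff)
  have "int b * int c \<le> int b * (int a - 1)" and "int b * int c \<le> (int d - 1) * int c"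
    using \<open>c < a\<close> \<open>b < d\<close> by (simp_all add: mult_left_mono mult_right_mono)
  moreover have "int a \<le> int a * (int d - int b)" and "int d \<le> int d * (int a - int c)"
    using \<open>c < a\<close> \<open>b < d\<close> by simp_all
  ultimately show "a \<le> n" and "d \<le> n"
    using det by (simp_all add: algebra_simps)
qed

lemma mmul_mpow_Rmat_notin_RBset:
  assumes "X \<in> RBset n"
  shows "mmul X (mpow Rmat n) \<notin> RBset n"
proof
  obtain a b c d where X: "X = (a, b, c, d)"
    by (cases X) auto
  assume "mmul X (mpow Rmat n) \<in> RBset n"
  then have "a * n + b < c * n + d"
    by (simp add: X mpow_Rmat RBset_iff)
  moreover have "c < a" and "d \<le> n"
    using assms RBset_diagonal_le(2) by (auto simp: X RBset_iff)
  then have "c * n + d \<le> a * n"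
    using mult_right_mono[of "Suc c" a n] by simp
  ultimately show False
    by simp
qed

lemma mmul_mpow_Lmat_notin_RBset:
  assumes "X \<in> RBset n"
  shows "mmul X (mpow Lmat n) \<notin> RBset n"
proof
  obtain a b c d where X: "X = (a, b, c, d)"
    by (cases X) auto
  assume "mmul X (mpow Lmat n) \<in> RBset n"
  then have "c + d * n < a + b * n"
    by (simp add: X mpow_Lmat RBset_iff algebra_simps)
  moreover have "b < d" and "a \<le> n"
    using assms RBset_diagonal_le(1) by (auto simp: X RBset_iff)
  then have "b * n + a \<le> d * n"
    using mult_right_mono[of "Suc b" d n] by simp
  ultimately show False
    by simp
qed

theorem lemma16:
  fixes n :: nat and Q X :: mat2 and i :: nat
  assumes "n > 0"
    and "Q \<in> {Lmat, Rmat}"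
    and "X \<in> RBset n"
    and "i > 0"
    and "mmul X (mpow Q i) \<notin> RBset n"
    and "\<forall>j. 0 < j \<and> j < i \<longrightarrow> mmul X (mpow Q j) \<in> RBset n"
  shows "i \<le> n"
proof (rule ccontr)
  assume "\<not> i \<le> n"
  then have "mmul X (mpow Q n) \<in> RBset n"
    using assms(1,6) by simp
  moreover have "mmul X (mpow Q n) \<notin> RBset n"
    using assms(2,3) mmul_mpow_Lmat_notin_RBset mmul_mpow_Rmat_notin_RBset by blast
  ultimately show False
    by contradiction
qed

end
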